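(* Let $\mathcal G=(I,O,\lambda)$ be a synchronous game and let $t\in\{loc,q,qa,qc,vect\}$. Then $p(a,b|v,w)$ is a perfect t-strategy for $\mathcal G$ if and only if $p(a,b|v,w)$ is a perfect t-strategy for $\mathcal G_s$.
   Context: A synchronous game $\mathcal G=(I,O,\lambda)$ consists of finite sets $I,O$ and $\lambda:I\times I\times O\times O\to\{0,1\}$ with $\lambda(v,v,a,b)=1$ if $a=b$ and $0$ if $a\ne b$. $\mathcal G_s=(I,O,\lambda_s)$ where $\lambda_s(v,w,a,b)=\lambda(v,w,a,b)\lambda(w,v,b,a)$. A strategy is a conditional probability density $p(a,b|v,w)$; it is perfect for a game with rule $\lambda$ if $\lambda(v,w,a,b)=0\Rightarrow p(a,b|v,w)=0$. The classes: loc = densities $p(a,b|v,w)=P(f_v=a,g_w=b)$ for random variables $f_v,g_w$ on a common probability space; q = densities $\langle(E_{v,a}\otimes F_{w,b})\psi,\psi\rangle$ with finite-dimensional Hilbert spaces, a unit vector $\psi$, and projection-valued measures $\{E_{v,a}\}_a$, $\{F_{w,b}\}_b$ (orthogonal projections summing to $I$); qa = closure of the set of q-densities; qc = densities $\langle E_{v,a}F_{w,b}\psi,\psi\rangle$ on a single Hilbert space with projection-valued measures satisfying $E_{v,a}F_{w,b}=F_{w,b}E_{v,a}$; vect = densities $\langle h_{v,a},k_{w,b}\rangle$ where for each $v$ the $h_{v,a}$ ($a\in O$) are mutually orthogonal, likewise the $k_{v,b}$, there is a unit vector $\eta$ with $\sum_ah_{v,a}=\eta=\sum_bk_{w,b}$,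 and all $\langle h_{v,a},k_{w,b}\rangle\ge0$. *)

theory Defs
  imports "HOL-Analysis.Analysis" "HOL-Probability.Probability"
begin

text \<open>A game on finite question set 'i and finite answer set 'o is a rule
  lam v w a b (true = 1, false = 0).  Strategies are densities p a b v w = p(a,b|v,w).\<close>

definition synchronous_game :: "('i::finite \<Rightarrow> 'i \<Rightarrow> 'o::finite \<Rightarrow> 'o \<Rightarrow> bool) \<Rightarrow> bool" where
  "synchronous_game lam \<longleftrightarrow> (\<forall>v a b. lam v v a b \<longleftrightarrow> a = b)"

definition sym_rule :: "('i \<Rightarrow> 'i \<Rightarrow> 'o \<Rightarrow> 'o \<Rightarrow> bool) \<Rightarrow> ('i \<Rightarrow> 'i \<Rightarrow> 'o \<Rightarrow> 'o \<Rightarrow> bool)" where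
  "sym_rule lam = (\<lambda>v w a b. lam v w a b \<and> lam w v b a)"

definition perfect :: "('i \<Rightarrow> 'i \<Rightarrow> 'o \<Rightarrow> 'o \<Rightarrow> bool) \<Rightarrow> ('o \<Rightarrow> 'o \<Rightarrow> 'i \<Rightarrow> 'i \<Rightarrow> real) \<Rightarrow> bool" where
  "perfect lam p \<longleftrightarrow> (\<forall>v w a b. \<not> lam v w a b \<longrightarrow> p a b v w = 0)"

text \<open>A complex Hilbert space is represented as a real Hilbert space (type of class
  real_inner + complete_space, real inner product = Re of the complex one) together with
  a complex structure J (multiplication by i).\<close>

definition complex_structure :: "('h::real_inner \<Rightarrow> 'h) \<Rightarrow> bool" where
  "complex_structure J \<longleftrightarrow> linear J \<and> (\<forall>x. J (J x) = - x) \<and> (\<forall>x y. inner (J x) (J y) = inner x y)"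

definition cinner :: "('h::real_inner \<Rightarrow> 'h) \<Rightarrow> 'h \<Rightarrow> 'h \<Rightarrow> complex" where
  "cinner J x y = Complex (inner x y) (inner x (J y))"

definition is_projection :: "('h::real_inner \<Rightarrow> 'h) \<Rightarrow> ('h \<Rightarrow> 'h) \<Rightarrow> bool" where
  "is_projection J P \<longleftrightarrow> bounded_linear P \<and> (\<forall>x. P (J x) = J (P x)) \<and> (\<forall>x. P (P x) = P x)
      \<and> (\<forall>x y. inner (P x) y = inner x (P y))"

definition is_pvm :: "('h::real_inner \<Rightarrow> 'h) \<Rightarrow> ('o::finite \<Rightarrow> 'h \<Rightarrow> 'h) \<Rightarrow> bool" where
  "is_pvm J E \<longleftrightarrow> (\<forall>a. is_projection J (E a)) \<and> (\<forall>x. (\<Sum>a\<in>UNIV. E a x) = x)"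

text \<open>An n x n complex matrix is a function nat \<Rightarrow> nat \<Rightarrow> complex, only entries with
  indices < n matter.  Vectors of C^n \<otimes> C^m are functions on index pairs.\<close>

definition mat_projection :: "nat \<Rightarrow> (nat \<Rightarrow> nat \<Rightarrow> complex) \<Rightarrow> bool" where
  "mat_projection n P \<longleftrightarrow> (\<forall>i<n. \<forall>j<n. cnj (P j i) = P i j)
      \<and> (\<forall>i<n. \<forall>j<n. (\<Sum>k<n. P i k * P k j) = P i j)"

definition mat_pvm :: "nat \<Rightarrow> ('o::finite \<Rightarrow> nat \<Rightarrow> nat \<Rightarrow> complex) \<Rightarrow> bool" where
  "mat_pvm n E \<longleftrightarrow> (\<forall>a. mat_projection n (E a))
      \<and> (\<forall>i<n. \<forall>j<n. (\<Sum>a\<in>UNIV. E a i j) = (if i = j then 1 else 0))"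

definition tensor_expect :: "nat \<Rightarrow> nat \<Rightarrow> (nat \<Rightarrow> nat \<Rightarrow> complex) \<Rightarrow> (nat \<Rightarrow> nat \<Rightarrow> complex)
    \<Rightarrow> (nat \<times> nat \<Rightarrow> complex) \<Rightarrow> complex" where
  "tensor_expect n m A B psi =
     (\<Sum>i<n. \<Sum>j<m. (\<Sum>i'<n. \<Sum>j'<m. A i i' * B j j' * psi (i', j')) * cnj (psi (i, j)))"

definition loc_strategy :: "'m itself \<Rightarrow> ('o::finite \<Rightarrow> 'o \<Rightarrow> 'i::finite \<Rightarrow> 'i \<Rightarrow> real) \<Rightarrow> bool" where
  "loc_strategy (_ :: 'm itself) p \<longleftrightarrow>
     (\<exists>(M :: 'm measure) (f :: 'i \<Rightarrow> 'm \<Rightarrow> 'o) (g :: 'i \<Rightarrow> 'm \<Rightarrow> 'o).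
        prob_space M \<and>
        (\<forall>v. f v \<in> measurable M (count_space UNIV)) \<and>
        (\<forall>w. g w \<in> measurable M (count_space UNIV)) \<and>
        (\<forall>a b v w. p a b v w = measure M {x \<in> space M. f v x = a \<and> g w x = b}))"

definition q_strategy :: "('o::finite \<Rightarrow> 'o \<Rightarrow> 'i::finite \<Rightarrow> 'i \<Rightarrow> real) \<Rightarrow> bool" where
  "q_strategy p \<longleftrightarrow>
     (\<exists>(n::nat) (m::nat) (E :: 'i \<Rightarrow> 'o \<Rightarrow> nat \<Rightarrow> nat \<Rightarrow> complex)
        (F :: 'i \<Rightarrow> 'o \<Rightarrow> nat \<Rightarrow> nat \<Rightarrow> complex) (psi :: nat \<times> nat \<Rightarrow> complex).
        (\<Sum>i<n. \<Sum>j<m. (cmod (psi (i, j)))\<^sup>2) = 1 \<and>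
        (\<forall>v. mat_pvm n (E v)) \<and> (\<forall>w. mat_pvm m (F w)) \<and>
        (\<forall>a b v w. complex_of_real (p a b v w) = tensor_expect n m (E v a) (F w b) psi))"

definition qa_strategy :: "('o::finite \<Rightarrow> 'o \<Rightarrow> 'i::finite \<Rightarrow> 'i \<Rightarrow> real) \<Rightarrow> bool" where
  "qa_strategy p \<longleftrightarrow> p \<in> closure {p'. q_strategy p'}"

definition qc_strategy :: "'h::{real_inner,complete_space} itself \<Rightarrow>
    ('o::finite \<Rightarrow> 'o \<Rightarrow> 'i::finite \<Rightarrow> 'i \<Rightarrow> real) \<Rightarrow> bool" where
  "qc_strategy (_ :: 'h itself) p \<longleftrightarrow>
     (\<exists>(J :: 'h \<Rightarrow> 'h) (E :: 'i \<Rightarrow> 'o \<Rightarrow> 'h \<Rightarrow> 'h) (F :: 'i \<Rightarrow> 'o \<Rightarrow> 'h \<Rightarrow> 'h) (psi :: 'h).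
        complex_structure J \<and> norm psi = 1 \<and>
        (\<forall>v. is_pvm J (E v)) \<and> (\<forall>w. is_pvm J (F w)) \<and>
        (\<forall>v w a b. E v a \<circ> F w b = F w b \<circ> E v a) \<and>
        (\<forall>a b v w. complex_of_real (p a b v w) = cinner J (E v a (F w b psi)) psi))"

definition vect_strategy :: "'h::{real_inner,complete_space} itself \<Rightarrow>
    ('o::finite \<Rightarrow> 'o \<Rightarrow> 'i::finite \<Rightarrow> 'i \<Rightarrow> real) \<Rightarrow> bool" where
  "vect_strategy (_ :: 'h itself) p \<longleftrightarrow>
     (\<exists>(J :: 'h \<Rightarrow> 'h) (h :: 'i \<Rightarrow> 'o \<Rightarrow> 'h) (k :: 'i \<Rightarrow> 'o \<Rightarrow> 'h) (eta :: 'h).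
        complex_structure J \<and> norm eta = 1 \<and>
        (\<forall>v a a'. a \<noteq> a' \<longrightarrow> cinner J (h v a) (h v a') = 0) \<and>
        (\<forall>w b b'. b \<noteq> b' \<longrightarrow> cinner J (k w b) (k w b') = 0) \<and>
        (\<forall>v. (\<Sum>a\<in>UNIV. h v a) = eta) \<and> (\<forall>w. (\<Sum>b\<in>UNIV. k w b) = eta) \<and>
        (\<forall>v w a b. Im (cinner J (h v a) (k w b)) = 0 \<and> Re (cinner J (h v a) (k w b)) \<ge> 0) \<and>
        (\<forall>a b v w. complex_of_real (p a b v w) = cinner J (h v a) (k w b)))"

datatype strat_class = Loc | Q | QA | QC | Vect

text \<open>p is a t-strategy.  The probability space of loc lives on type 'm and the Hilbert
  space of qc/vect on type 'h; these types are universally quantified in the main theorem.\<close>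
definition t_strategy :: "'m itself \<Rightarrow> 'h::{real_inner,complete_space} itself \<Rightarrow> strat_class \<Rightarrow>
    ('o::finite \<Rightarrow> 'o \<Rightarrow> 'i::finite \<Rightarrow> 'i \<Rightarrow> real) \<Rightarrow> bool" where
  "t_strategy TM TH t p = (case t of
      Loc \<Rightarrow> loc_strategy TM p
    | Q \<Rightarrow> q_strategy p
    | QA \<Rightarrow> qa_strategy p
    | QC \<Rightarrow> qc_strategy TH p
    | Vect \<Rightarrow> vect_strategy TH p)"

end

theory Submission
  imports Defs
begin

text \<open>In every quantum model the density has the form p(a,b|v,w) = \<langle>h(v,a), k(w,b)\<rangle>
  with \<Sum>a h(v,a) = \<Sum>b k(w,b) = \<eta>, \<parallel>h(v,a)\<parallel>^2 = \<langle>h(v,a), \<eta>\<rangle> and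
  \<parallel>k(w,b)\<parallel>^2 = \<langle>\<eta>, k(w,b)\<rangle>. Writing
  p(a,b|v,w) - p(b,a|w,v) = \<langle>h(v,a) - k(v,a), k(w,b)\<rangle> - \<langle>h(w,b) - k(w,b), k(v,a)\<rangle>,
  Cauchy-Schwarz bounds the asymmetry of p in terms of \<parallel>h(v,a) - k(v,a)\<parallel>^2, which is the
  mass p puts on unequal answers to the question pair (v,v). The bound is a closed condition on
  p, hence also holds on the closure qa. A perfect strategy for a synchronous game puts no
  mass on unequal answers to equal questions, so it is symmetric, p(a,b|v,w) = p(b,a|w,v), and
  therefore also perfect for the symmetrised rule. For loc the same conclusion comes from
  f(v) = g(v) almost surely.\<close>

type_synonym ('o, 'i) density = "'o \<Rightarrow> 'o \<Rightarrow> 'i \<Rightarrow> 'i \<Rightarrow> real"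

lemma quadratic_nonneg_discriminant:
  fixes D c Z :: real
  assumes nonneg: "\<And>t. 0 \<le> D - 2*t*c + t\<^sup>2*Z"
  shows "c\<^sup>2 \<le> D*Z"
proof (cases "Z > 0")
  case True
  have "0 \<le> D - 2*(c/Z)*c + (c/Z)\<^sup>2*Z" by (rule nonneg)
  also have "\<dots> = D - c\<^sup>2/Z" using True by (simp add: power2_eq_square field_simps)
  finally show ?thesis using True by (simp add: field_simps)
next
  case False
  have c0: "c = 0"
  proof (rule ccontr)
    assume "c \<noteq> 0"
    have "0 \<le> D - 2*((D+1)/(2*c))*c + ((D+1)/(2*c))\<^sup>2*Z" by (rule nonneg)
    moreover have "((D+1)/(2*c))\<^sup>2*Z \<le> 0" using False by (simp add: mult_nonneg_nonpos)
    moreover have "2*((D+1)/(2*c))*c = D+1" using \<open>c \<noteq> 0\<close> by simp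
    ultimately show False by linarith
  qed
  have "Z = 0"
  proof (rule ccontr)
    assume "Z \<noteq> 0"
    with False have "Z < 0" by simp
    define t where "t = sqrt ((D+1)/(-Z))"
    have "0 \<le> D" using nonneg[of 0] by simp
    then have "t\<^sup>2 = (D+1)/(-Z)" unfolding t_def using \<open>Z < 0\<close> by (simp add: divide_nonneg_neg)
    then have "t\<^sup>2 * Z = -(D+1)" using \<open>Z < 0\<close> by (simp add: field_simps)
    with nonneg[of t] c0 show False by simp
  qed
  with c0 show ?thesis by simp
qed

text \<open>The hypothesis is the nonnegativity of the expanded square \<parallel>x - y - t z\<parallel>^2 of a
  real semi-inner product: the tensor model of the class q lives on nat \<times> nat \<Rightarrow> complex,
  which is no real_inner type.\<close>

lemma difference_cauchy_schwarz:
  fixes ip :: "'v \<Rightarrow> 'v \<Rightarrow> real"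
  assumes "\<And>t. 0 \<le> ip x x + ip y y + t\<^sup>2*ip z z - 2*ip x y - 2*t*ip x z + 2*t*ip y z"
  shows "\<bar>ip x z - ip y z\<bar> \<le> sqrt ((ip x x + ip y y - 2*ip x y) * ip z z)"
proof -
  have "(ip x z - ip y z)\<^sup>2 \<le> (ip x x + ip y y - 2*ip x y) * ip z z"
    by (rule quadratic_nonneg_discriminant) (use assms in \<open>simp add: algebra_simps\<close>)
  then show ?thesis
    using real_sqrt_le_mono by fastforce
qed

definition offdiag_mass :: "('o::finite, 'i) density \<Rightarrow> 'i \<Rightarrow> 'o \<Rightarrow> real" where
  "offdiag_mass p v a = (\<Sum>b\<in>UNIV-{a}. p a b v v) + (\<Sum>a'\<in>UNIV-{a}. p a' a v v)"

definition diag_marginal :: "('o::finite, 'i) density \<Rightarrow> 'i \<Rightarrow> 'o \<Rightarrow> real" where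
  "diag_marginal p w b = (\<Sum>a\<in>UNIV. p a b w w)"

text \<open>In a vector model, offdiag_mass p v a = \<parallel>h(v,a) - k(v,a)\<parallel>^2 and
  diag_marginal p w b = \<parallel>k(w,b)\<parallel>^2.\<close>

definition symmetry_estimate :: "('o::finite, 'i) density \<Rightarrow> 'o \<Rightarrow> 'o \<Rightarrow> 'i \<Rightarrow> 'i \<Rightarrow> bool" where
  "symmetry_estimate p a b v w \<longleftrightarrow>
     \<bar>p a b v w - p b a w v\<bar>
       \<le> sqrt (offdiag_mass p v a * diag_marginal p w b) + sqrt (offdiag_mass p w b * diag_marginal p v a)"

lemma symmetry_estimate_vector_model:
  fixes ip :: "'v \<Rightarrow> 'v \<Rightarrow> real" and h k :: "'i \<Rightarrow> 'o::finite \<Rightarrow> 'v"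
    and p :: "('o, 'i) density"
  assumes sym: "\<And>x y. ip x y = ip y x"
    and nonneg: "\<And>x y z t. 0 \<le> ip x x + ip y y + t\<^sup>2*ip z z - 2*ip x y - 2*t*ip x z + 2*t*ip y z"
    and sum_k: "\<And>v a. ip (h v a) eta = (\<Sum>b\<in>UNIV. ip (h v a) (k v b))"
    and sum_h: "\<And>w b. ip eta (k w b) = (\<Sum>a\<in>UNIV. ip (h w a) (k w b))"
    and norm_h: "\<And>v a. ip (h v a) (h v a) = ip (h v a) eta"
    and norm_k: "\<And>w b. ip (k w b) (k w b) = ip eta (k w b)"
    and p_eq: "\<And>a b v w. p a b v w = ip (h v a) (k w b)"
  shows "symmetry_estimate p a b v w"
proof -
  have dist_hk: "ip (h v a) (h v a) + ip (k v a) (k v a) - 2 * ip (h v a) (k v a) = offdiag_mass p v a"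
    for v a
    unfolding offdiag_mass_def norm_h norm_k sum_k sum_h p_eq[symmetric]
    by (simp add: sum.remove[of UNIV a])
  have norm_k': "ip (k w b) (k w b) = diag_marginal p w b" for w b
    unfolding norm_k sum_h diag_marginal_def p_eq ..
  have "\<bar>ip (h v a) (k w b) - ip (k v a) (k w b)\<bar> \<le> sqrt (offdiag_mass p v a * diag_marginal p w b)"
    using difference_cauchy_schwarz[of ip "h v a" "k v a" "k w b", OF nonneg] dist_hk norm_k' by simp
  moreover have "\<bar>ip (h w b) (k v a) - ip (k w b) (k v a)\<bar> \<le> sqrt (offdiag_mass p w b * diag_marginal p v a)"
    using difference_cauchy_schwarz[of ip "h w b" "k w b" "k v a", OF nonneg] dist_hk norm_k' by simp
  moreover have "p a b v w - p b a w v
      = (ip (h v a) (k w b) - ip (k v a) (k w b)) - (ip (h w b) (k v a) - ip (k w b) (k v a))"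
    unfolding p_eq using sym[of "k v a" "k w b"] by simp
  ultimately show ?thesis unfolding symmetry_estimate_def by linarith
qed

lemma offdiag_mass_eq_0_of_perfect:
  assumes "synchronous_game lam" and "perfect lam p"
  shows "offdiag_mass p v a = 0"
proof -
  have "p x y v v = 0" if "x \<noteq> y" for x y
    using assms that unfolding synchronous_game_def perfect_def by auto
  then show ?thesis unfolding offdiag_mass_def by simp
qed

lemma symmetric_of_symmetry_estimate:
  assumes "symmetry_estimate p a b v w" and "synchronous_game lam" and "perfect lam p"
  shows "p a b v w = p b a w v"
  using assms unfolding symmetry_estimate_def by (simp add: offdiag_mass_eq_0_of_perfect)

lemma inner_nonneg_expanded:
  fixes x y z :: "'h::real_inner"
  shows "0 \<le> inner x x + inner y y + t\<^sup>2*inner z z - 2*inner x y - 2*t*inner x z + 2*t*inner y z"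
  using inner_ge_zero[of "x - y - t *\<^sub>R z"]
  by (simp add: inner_diff_left inner_diff_right inner_commute algebra_simps power2_eq_square)

lemma symmetry_estimate_inner_model:
  fixes h k :: "'i \<Rightarrow> 'o::finite \<Rightarrow> 'h::real_inner"
  assumes sum_h: "\<And>v. (\<Sum>a\<in>UNIV. h v a) = eta" and sum_k: "\<And>w. (\<Sum>b\<in>UNIV. k w b) = eta"
    and norm_h: "\<And>v a. inner (h v a) (h v a) = inner (h v a) eta"
    and norm_k: "\<And>w b. inner (k w b) (k w b) = inner eta (k w b)"
    and p_eq: "\<And>a b v w. p a b v w = inner (h v a) (k w b)"
  shows "symmetry_estimate p a b v w"
proof (rule symmetry_estimate_vector_model[where ip=inner and h=h and k=k and eta=eta])
  show "inner (h v a) eta = (\<Sum>b\<in>UNIV. inner (h v a) (k v b))" for v a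
    by (simp add: sum_k[of v, symmetric] inner_sum_right)
  show "inner eta (k w b) = (\<Sum>a\<in>UNIV. inner (h w a) (k w b))" for w b
    by (simp add: sum_h[of w, symmetric] inner_sum_left)
qed (simp_all add: inner_commute inner_nonneg_expanded norm_h norm_k p_eq)

lemma Re_cinner [simp]: "Re (cinner J x y) = inner x y"
  by (simp add: cinner_def)

lemma vect_strategy_symmetry_estimate:
  assumes "vect_strategy TYPE('h::{real_inner,complete_space}) p"
  shows "symmetry_estimate p a b v w"
proof -
  obtain J :: "'h \<Rightarrow> 'h" and h k eta where
    orth_h: "\<forall>v a a'. a \<noteq> a' \<longrightarrow> cinner J (h v a) (h v a') = 0" and
    orth_k: "\<forall>w b b'. b \<noteq> b' \<longrightarrow> cinner J (k w b) (k w b') = 0" and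
    sum_h: "\<forall>v. (\<Sum>a\<in>UNIV. h v a) = eta" and sum_k: "\<forall>w. (\<Sum>b\<in>UNIV. k w b) = eta" and
    p_eq: "\<forall>a b v w. complex_of_real (p a b v w) = cinner J (h v a) (k w b)"
    using assms unfolding vect_strategy_def by (elim exE conjE) (rule that)
  have orth_h': "inner (h v a) (h v a') = 0" if "a \<noteq> a'" for v a a'
    using orth_h that Re_cinner[of J "h v a" "h v a'"] by auto
  have orth_k': "inner (k w b') (k w b) = 0" if "b \<noteq> b'" for w b b'
    using orth_k that Re_cinner[of J "k w b'" "k w b"] by auto
  show ?thesis
  proof (rule symmetry_estimate_inner_model[where h=h and k=k and eta=eta])
    show "inner (h v a) (h v a) = inner (h v a) eta" for v a
      using orth_h' by (simp add: sum_h[rule_format, of v, symmetric] sum.remove[of UNIV a]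
          inner_add_right inner_sum_right)
    show "inner (k w b) (k w b) = inner eta (k w b)" for w b
      using orth_k' by (simp add: sum_k[rule_format, of w, symmetric] sum.remove[of UNIV b]
          inner_add_left inner_sum_left)
    show "p a b v w = inner (h v a) (k w b)" for a b v w
      using arg_cong[OF p_eq[rule_format, of a b v w], of Re] by simp
  qed (use sum_h sum_k in auto)
qed

lemma qc_strategy_symmetry_estimate:
  assumes "qc_strategy TYPE('h::{real_inner,complete_space}) p"
  shows "symmetry_estimate p a b v w"
proof -
  obtain J :: "'h \<Rightarrow> 'h" and E F psi where
    pvm_E: "\<forall>v. is_pvm J (E v)" and pvm_F: "\<forall>w. is_pvm J (F w)" and
    p_eq: "\<forall>a b v w. complex_of_real (p a b v w) = cinner J (E v a (F w b psi)) psi"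
    using assms unfolding qc_strategy_def by (elim exE conjE) (rule that)
  have adj_E: "inner (E v a x) y = inner x (E v a y)"
    and idem_E: "E v a (E v a x) = E v a x"
    and sum_E: "(\<Sum>a\<in>UNIV. E v a x) = x" for v a x y
    using pvm_E unfolding is_pvm_def is_projection_def by blast+
  have adj_F: "inner (F w b x) y = inner x (F w b y)"
    and idem_F: "F w b (F w b x) = F w b x"
    and sum_F: "(\<Sum>b\<in>UNIV. F w b x) = x" for w b x y
    using pvm_F unfolding is_pvm_def is_projection_def by blast+
  show ?thesis
  proof (rule symmetry_estimate_inner_model[where h="\<lambda>v a. E v a psi" and k="\<lambda>w b. F w b psi"])
    show "inner (E v a psi) (E v a psi) = inner (E v a psi) psi" for v a
      using adj_E[of v a psi "E v a psi"] by (simp add: idem_E inner_commute)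
    show "inner (F w b psi) (F w b psi) = inner psi (F w b psi)" for w b
      using adj_F[of w b psi "F w b psi"] by (simp add: idem_F)
    show "p a b v w = inner (E v a psi) (F w b psi)" for a b v w
    proof -
      have "p a b v w = inner (E v a (F w b psi)) psi"
        using arg_cong[OF p_eq[rule_format, of a b v w], of Re] by simp
      also have "\<dots> = inner (F w b psi) (E v a psi)" by (rule adj_E)
      finally show ?thesis by (simp add: inner_commute)
    qed
  qed (simp_all add: sum_E sum_F)
qed

type_synonym cmatrix = "nat \<Rightarrow> nat \<Rightarrow> complex"
type_synonym tensor_vector = "nat \<times> nat \<Rightarrow> complex"

text \<open>act_left n A and act_right m B are A \<otimes> 1 and 1 \<otimes> B on \<complex>^n \<otimes> \<complex>^m.\<close>

definition tensor_inner :: "nat \<Rightarrow> nat \<Rightarrow> tensor_vector \<Rightarrow> tensor_vector \<Rightarrow> complex" where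
  "tensor_inner n m x y = (\<Sum>i<n. \<Sum>j<m. x (i,j) * cnj (y (i,j)))"

definition act_left :: "nat \<Rightarrow> cmatrix \<Rightarrow> tensor_vector \<Rightarrow> tensor_vector" where
  "act_left n A x = (\<lambda>(i,j). \<Sum>i'<n. A i i' * x (i',j))"

definition act_right :: "nat \<Rightarrow> cmatrix \<Rightarrow> tensor_vector \<Rightarrow> tensor_vector" where
  "act_right m B x = (\<lambda>(i,j). \<Sum>j'<m. B j j' * x (i,j'))"

lemma tensor_expect_eq_tensor_inner:
  "tensor_expect n m A B psi = tensor_inner n m (act_left n A (act_right m B psi)) psi"
  unfolding tensor_expect_def tensor_inner_def act_left_def act_right_def
  by (simp add: sum_distrib_left mult.assoc)

lemma tensor_inner_cong:
  assumes "\<And>i j. i < n \<Longrightarrow> j < m \<Longrightarrow> x (i,j) = x' (i,j)"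
      and "\<And>i j. i < n \<Longrightarrow> j < m \<Longrightarrow> y (i,j) = y' (i,j)"
  shows "tensor_inner n m x y = tensor_inner n m x' y'"
  unfolding tensor_inner_def using assms by (intro sum.cong refl) auto

lemma tensor_inner_sum_left:
  "tensor_inner n m (\<lambda>ij. \<Sum>b\<in>S. y b ij) x = (\<Sum>b\<in>S. tensor_inner n m (y b) x)"
  unfolding tensor_inner_def by (simp add: sum_distrib_right sum.swap[of _ S])

lemma tensor_inner_sum_right:
  "tensor_inner n m x (\<lambda>ij. \<Sum>b\<in>S. y b ij) = (\<Sum>b\<in>S. tensor_inner n m x (y b))"
  unfolding tensor_inner_def by (simp add: cnj_sum sum_distrib_left sum.swap[of _ S])

lemma tensor_inner_commute: "tensor_inner n m y x = cnj (tensor_inner n m x y)"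
  unfolding tensor_inner_def by (simp add: cnj_sum mult.commute)

lemma Re_tensor_inner_commute: "Re (tensor_inner n m y x) = Re (tensor_inner n m x y)"
  by (simp add: tensor_inner_commute[of n m y x])

lemma Re_tensor_inner_nonneg_expanded:
  "0 \<le> Re (tensor_inner n m x x) + Re (tensor_inner n m y y) + t\<^sup>2 * Re (tensor_inner n m z z)
     - 2 * Re (tensor_inner n m x y) - 2 * t * Re (tensor_inner n m x z) + 2 * t * Re (tensor_inner n m y z)"
proof -
  have pointwise: "Re (a * cnj a) + Re (b * cnj b) + t\<^sup>2 * Re (c * cnj c) - 2 * Re (a * cnj b)
      - 2 * t * Re (a * cnj c) + 2 * t * Re (b * cnj c) = (cmod (a - b - of_real t * c))\<^sup>2"
    for a b c :: complex
    unfolding cmod_power2 by (simp add: algebra_simps power2_eq_square)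
  have "Re (tensor_inner n m x x) + Re (tensor_inner n m y y) + t\<^sup>2 * Re (tensor_inner n m z z)
     - 2 * Re (tensor_inner n m x y) - 2 * t * Re (tensor_inner n m x z) + 2 * t * Re (tensor_inner n m y z)
     = (\<Sum>i<n. \<Sum>j<m. (cmod (x (i,j) - y (i,j) - of_real t * z (i,j)))\<^sup>2)"
    unfolding tensor_inner_def pointwise[symmetric]
    by (simp add: Re_sum sum.distrib sum_subtractf sum_distrib_left ring_distribs)
  also have "\<dots> \<ge> 0" by (intro sum_nonneg) auto
  finally show ?thesis by simp
qed

lemma tensor_inner_act_left_adjoint:
  assumes "\<And>i j. i < n \<Longrightarrow> j < n \<Longrightarrow> cnj (A j i) = A i j"
  shows "tensor_inner n m (act_left n A x) y = tensor_inner n m x (act_left n A y)"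
proof -
  have "tensor_inner n m (act_left n A x) y = (\<Sum>i<n. \<Sum>j<m. \<Sum>i'<n. A i i' * x (i',j) * cnj (y (i,j)))"
    unfolding tensor_inner_def act_left_def by (simp add: sum_distrib_right)
  also have "\<dots> = (\<Sum>i<n. \<Sum>i'<n. \<Sum>j<m. A i i' * x (i',j) * cnj (y (i,j)))"
    by (simp add: sum.swap[of _ "{..<m}"])
  also have "\<dots> = (\<Sum>i'<n. \<Sum>i<n. \<Sum>j<m. A i i' * x (i',j) * cnj (y (i,j)))"
    by (rule sum.swap)
  also have "\<dots> = (\<Sum>i'<n. \<Sum>j<m. \<Sum>i<n. A i i' * x (i',j) * cnj (y (i,j)))"
    by (simp add: sum.swap[of _ "{..<m}"])
  also have "\<dots> = (\<Sum>i'<n. \<Sum>j<m. \<Sum>i<n. x (i',j) * (cnj (A i' i) * cnj (y (i,j))))"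
    by (intro sum.cong refl) (simp add: assms)
  also have "\<dots> = tensor_inner n m x (act_left n A y)"
    unfolding tensor_inner_def act_left_def by (simp add: cnj_sum sum_distrib_left)
  finally show ?thesis .
qed

lemma tensor_inner_act_right_adjoint:
  assumes "\<And>i j. i < m \<Longrightarrow> j < m \<Longrightarrow> cnj (B j i) = B i j"
  shows "tensor_inner n m (act_right m B x) y = tensor_inner n m x (act_right m B y)"
proof -
  have "tensor_inner n m (act_right m B x) y = (\<Sum>i<n. \<Sum>j<m. \<Sum>j'<m. B j j' * x (i,j') * cnj (y (i,j)))"
    unfolding tensor_inner_def act_right_def by (simp add: sum_distrib_right)
  also have "\<dots> = (\<Sum>i<n. \<Sum>j'<m. \<Sum>j<m. B j j' * x (i,j') * cnj (y (i,j)))"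
    by (rule sum.cong[OF refl], rule sum.swap)
  also have "\<dots> = (\<Sum>i<n. \<Sum>j'<m. \<Sum>j<m. x (i,j') * (cnj (B j' j) * cnj (y (i,j))))"
    by (intro sum.cong refl) (simp add: assms)
  also have "\<dots> = tensor_inner n m x (act_right m B y)"
    unfolding tensor_inner_def act_right_def by (simp add: cnj_sum sum_distrib_left)
  finally show ?thesis .
qed

lemma act_left_idem:
  assumes "mat_projection n A" and "i < n"
  shows "act_left n A (act_left n A x) (i,j) = act_left n A x (i,j)"
proof -
  have "act_left n A (act_left n A x) (i,j) = (\<Sum>i''<n. (\<Sum>i'<n. A i i' * A i' i'') * x (i'',j))"
    unfolding act_left_def
    by (simp add: sum_distrib_left sum_distrib_right mult.assoc) (rule sum.swap)
  also have "\<dots> = act_left n A x (i,j)"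
    unfolding act_left_def using assms unfolding mat_projection_def by (auto intro!: sum.cong)
  finally show ?thesis .
qed

lemma act_right_idem:
  assumes "mat_projection m B" and "j < m"
  shows "act_right m B (act_right m B x) (i,j) = act_right m B x (i,j)"
proof -
  have "act_right m B (act_right m B x) (i,j) = (\<Sum>j''<m. (\<Sum>j'<m. B j j' * B j' j'') * x (i,j''))"
    unfolding act_right_def
    by (simp add: sum_distrib_left sum_distrib_right mult.assoc) (rule sum.swap)
  also have "\<dots> = act_right m B x (i,j)"
    unfolding act_right_def using assms unfolding mat_projection_def by (auto intro!: sum.cong)
  finally show ?thesis .
qed

lemma sum_act_left_pvm:
  assumes "mat_pvm n E" and "i < n"
  shows "(\<Sum>a\<in>UNIV. act_left n (E a) x (i,j)) = x (i,j)"
proof -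
  have "(\<Sum>a\<in>UNIV. act_left n (E a) x (i,j)) = (\<Sum>i'<n. (\<Sum>a\<in>UNIV. E a i i') * x (i',j))"
    unfolding act_left_def by (simp add: sum_distrib_right sum.swap[of _ UNIV])
  also have "\<dots> = (\<Sum>i'<n. if i = i' then x (i',j) else 0)"
    using assms unfolding mat_pvm_def by (intro sum.cong refl) auto
  also have "\<dots> = x (i,j)" using assms(2) by simp
  finally show ?thesis .
qed

lemma sum_act_right_pvm:
  assumes "mat_pvm m F" and "j < m"
  shows "(\<Sum>b\<in>UNIV. act_right m (F b) x (i,j)) = x (i,j)"
proof -
  have "(\<Sum>b\<in>UNIV. act_right m (F b) x (i,j)) = (\<Sum>j'<m. (\<Sum>b\<in>UNIV. F b j j') * x (i,j'))"
    unfolding act_right_def by (simp add: sum_distrib_right sum.swap[of _ UNIV])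
  also have "\<dots> = (\<Sum>j'<m. if j = j' then x (i,j') else 0)"
    using assms unfolding mat_pvm_def by (intro sum.cong refl) auto
  also have "\<dots> = x (i,j)" using assms(2) by simp
  finally show ?thesis .
qed

lemma tensor_inner_act_left_projection:
  assumes "mat_projection n A"
  shows "tensor_inner n m (act_left n A x) (act_left n A x) = tensor_inner n m x (act_left n A x)"
proof -
  have "tensor_inner n m (act_left n A x) (act_left n A x) = tensor_inner n m x (act_left n A (act_left n A x))"
    using assms unfolding mat_projection_def by (intro tensor_inner_act_left_adjoint) blast
  also have "\<dots> = tensor_inner n m x (act_left n A x)"
    by (rule tensor_inner_cong) (simp_all add: act_left_idem assms)
  finally show ?thesis .
qed

lemma tensor_inner_act_right_projection:
  assumes "mat_projection m B"
  shows "tensor_inner n m (act_right m B x) (act_right m B x) = tensor_inner n m (act_right m B x) x"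
proof -
  have "tensor_inner n m (act_right m B x) (act_right m B x) = tensor_inner n m (act_right m B (act_right m B x)) x"
    using assms unfolding mat_projection_def by (intro tensor_inner_act_right_adjoint[symmetric]) blast
  also have "\<dots> = tensor_inner n m (act_right m B x) x"
    by (rule tensor_inner_cong) (simp_all add: act_right_idem assms)
  finally show ?thesis .
qed

lemma q_strategy_symmetry_estimate:
  assumes "q_strategy p"
  shows "symmetry_estimate p a b v w"
proof -
  obtain n m E F psi where
    pvm_E: "\<forall>v. mat_pvm n (E v)" and pvm_F: "\<forall>w. mat_pvm m (F w)" and
    p_eq: "\<forall>a b v w. complex_of_real (p a b v w) = tensor_expect n m (E v a) (F w b) psi"
    using assms unfolding q_strategy_def by (elim exE conjE) (rule that)
  have proj_E: "mat_projection n (E v a)" and proj_F: "mat_projection m (F w b)" for v a w b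
    using pvm_E pvm_F unfolding mat_pvm_def by blast+
  let ?ip = "\<lambda>x y. Re (tensor_inner n m x y)"
  show ?thesis
  proof (rule symmetry_estimate_vector_model[where ip="?ip" and h="\<lambda>v a. act_left n (E v a) psi"
        and k="\<lambda>w b. act_right m (F w b) psi" and eta=psi])
    show "?ip (act_left n (E v a) psi) psi = (\<Sum>b\<in>UNIV. ?ip (act_left n (E v a) psi) (act_right m (F v b) psi))" for v a
    proof -
      have "tensor_inner n m (act_left n (E v a) psi) psi
          = tensor_inner n m (act_left n (E v a) psi) (\<lambda>ij. \<Sum>b\<in>UNIV. act_right m (F v b) psi ij)"
        by (rule tensor_inner_cong) (simp_all add: sum_act_right_pvm pvm_F)
      then show ?thesis by (simp add: tensor_inner_sum_right Re_sum)
    qed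
    show "?ip psi (act_right m (F w b) psi) = (\<Sum>a\<in>UNIV. ?ip (act_left n (E w a) psi) (act_right m (F w b) psi))" for w b
    proof -
      have "tensor_inner n m psi (act_right m (F w b) psi)
          = tensor_inner n m (\<lambda>ij. \<Sum>a\<in>UNIV. act_left n (E w a) psi ij) (act_right m (F w b) psi)"
        by (rule tensor_inner_cong) (simp_all add: sum_act_left_pvm pvm_E)
      then show ?thesis by (simp add: tensor_inner_sum_left Re_sum)
    qed
    show "?ip (act_left n (E v a) psi) (act_left n (E v a) psi) = ?ip (act_left n (E v a) psi) psi" for v a
      using Re_tensor_inner_commute by (metis tensor_inner_act_left_projection proj_E)
    show "?ip (act_right m (F w b) psi) (act_right m (F w b) psi) = ?ip psi (act_right m (F w b) psi)" for w b
      using Re_tensor_inner_commute by (metis tensor_inner_act_right_projection proj_F)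
    show "p a b v w = ?ip (act_left n (E v a) psi) (act_right m (F w b) psi)" for a b v w
    proof -
      have "p a b v w = Re (tensor_inner n m (act_left n (E v a) (act_right m (F w b) psi)) psi)"
        using arg_cong[OF p_eq[rule_format, of a b v w], of Re] by (simp add: tensor_expect_eq_tensor_inner)
      also have "\<dots> = Re (tensor_inner n m (act_right m (F w b) psi) (act_left n (E v a) psi))"
        using proj_E unfolding mat_projection_def by (subst tensor_inner_act_left_adjoint) blast+
      finally show ?thesis by (simp add: Re_tensor_inner_commute)
    qed
  qed (simp_all add: Re_tensor_inner_commute Re_tensor_inner_nonneg_expanded)
qed

lemma continuous_on_eval4:
  "continuous_on UNIV (\<lambda>f::('o, 'i) density. f a b v w)"
  by (rule continuous_on_product_then_coordinatewise[OF continuous_on_product_then_coordinatewise[OF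
        continuous_on_product_then_coordinatewise[OF continuous_on_product_then_coordinatewise[OF
        continuous_on_id]]]])

lemma closed_symmetry_estimate:
  "closed {p::('o::finite, 'i) density. symmetry_estimate p a b v w}"
  unfolding symmetry_estimate_def offdiag_mass_def diag_marginal_def
  by (intro closed_Collect_le continuous_intros continuous_on_eval4)

lemma qa_strategy_symmetry_estimate:
  assumes "qa_strategy p"
  shows "symmetry_estimate p a b v w"
proof -
  have "closure {p'. q_strategy p'} \<subseteq> {p'. symmetry_estimate p' a b v w}"
    by (intro closure_minimal closed_symmetry_estimate) (auto intro: q_strategy_symmetry_estimate)
  with assms show ?thesis unfolding qa_strategy_def by blast
qed

lemma loc_strategy_perfect_symmetric:
  assumes "loc_strategy TYPE('m) p" and "synchronous_game lam" and "perfect lam p"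
  shows "p a b v w = p b a w v"
proof -
  obtain M :: "'m measure" and f g where
    "prob_space M" and meas_f: "\<forall>v. f v \<in> measurable M (count_space UNIV)" and
    meas_g: "\<forall>w. g w \<in> measurable M (count_space UNIV)" and
    p_eq: "\<forall>a b v w. p a b v w = measure M {x \<in> space M. f v x = a \<and> g w x = b}"
    using assms(1) unfolding loc_strategy_def by (elim exE conjE) (rule that)
  interpret prob_space M by fact
  have "f v \<in> measurable M (count_space UNIV)" "g v \<in> measurable M (count_space UNIV)" for v
    using meas_f meas_g by blast+
  then have events: "{x \<in> space M. f v x = a \<and> g w x = b} \<in> sets M" for v w a b
    by measurable
  have "AE x in M. f v x = g v x" for v
  proof -
    have "AE x in M. a' \<noteq> b' \<longrightarrow> \<not> (f v x = a' \<and> g v x = b')" for a' b'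
    proof (cases "a' = b'")
      case False
      then have "p a' b' v v = 0"
        using assms(2,3) unfolding synchronous_game_def perfect_def by auto
      then have "emeasure M {x \<in> space M. f v x = a' \<and> g v x = b'} = 0"
        using p_eq events by (simp add: emeasure_eq_measure)
      with False show ?thesis using events[of v a' v b'] by (subst AE_iff_measurable) auto
    qed simp
    then have "AE x in M. \<forall>a'\<in>UNIV. \<forall>b'\<in>UNIV. a' \<noteq> b' \<longrightarrow> \<not> (f v x = a' \<and> g v x = b')"
      by (intro AE_finite_allI) simp_all
    then show ?thesis by eventually_elim auto
  qed
  then have "AE x in M. \<forall>v. f v x = g v x"
    by (subst AE_all_countable) simp
  then have "measure M {x \<in> space M. f v x = a \<and> g w x = b} = measure M {x \<in> space M. f w x = b \<and> g v x = a}"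
    by (intro measure_eq_AE) (use events in \<open>auto elim!: AE_mp\<close>)
  then show ?thesis using p_eq by simp
qed

lemma t_strategy_perfect_symmetric:
  assumes "t_strategy TYPE('m) TYPE('h::{real_inner,complete_space}) t p"
    and "synchronous_game lam" and "perfect lam p"
  shows "p a b v w = p b a w v"
proof (cases t)
  case Loc
  with assms show ?thesis unfolding t_strategy_def by (auto intro: loc_strategy_perfect_symmetric)
next
  case Q
  with assms show ?thesis unfolding t_strategy_def
    by (auto intro: symmetric_of_symmetry_estimate q_strategy_symmetry_estimate)
next
  case QA
  with assms show ?thesis unfolding t_strategy_def
    by (auto intro: symmetric_of_symmetry_estimate qa_strategy_symmetry_estimate)
next
  case QC
  with assms show ?thesis unfolding t_strategy_def
    by (auto intro: symmetric_of_symmetry_estimate qc_strategy_symmetry_estimate)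
next
  case Vect
  with assms show ?thesis unfolding t_strategy_def
    by (auto intro: symmetric_of_symmetry_estimate vect_strategy_symmetry_estimate)
qed

lemma perfect_of_perfect_sym_rule: "perfect (sym_rule lam) p \<Longrightarrow> perfect lam p"
  unfolding perfect_def sym_rule_def by blast

lemma perfect_sym_rule_of_symmetric:
  assumes "perfect lam p" and "\<And>a b v w. p a b v w = p b a w v"
  shows "perfect (sym_rule lam) p"
  using assms unfolding perfect_def sym_rule_def by metis

theorem mainTheorem10:
  fixes lam :: "'i::finite \<Rightarrow> 'i \<Rightarrow> 'o::finite \<Rightarrow> 'o \<Rightarrow> bool"
    and p :: "'o \<Rightarrow> 'o \<Rightarrow> 'i \<Rightarrow> 'i \<Rightarrow> real"
    and t :: strat_class
  assumes "synchronous_game lam"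
  shows "(t_strategy TYPE('m) TYPE('h::{real_inner,complete_space}) t p \<and> perfect lam p)
     \<longleftrightarrow> (t_strategy TYPE('m) TYPE('h) t p \<and> perfect (sym_rule lam) p)"
  using perfect_of_perfect_sym_rule perfect_sym_rule_of_symmetric
    t_strategy_perfect_symmetric[OF _ assms] by blast

end
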